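(* Let $\alpha_1,\alpha_2,\alpha_3,\beta_1,\beta_2,\beta_3,\beta_4,\gamma_1,\gamma_2,\gamma_3,\gamma_4$ be positive real constants satisfying $$\alpha_1+\alpha_2+\alpha_3=\beta_1-\beta_4=\gamma_1-\gamma_4.$$ Set $A_4=\alpha_1-(\gamma_1-\gamma_4)-\gamma_2$, $A_5=\beta_2-\gamma_2$, $A_6=\alpha_2-\gamma_3$, $A_7=(\beta_1-\beta_2-\beta_3-\beta_4)-(\gamma_1-\gamma_4)-\gamma_3$, and consider the planar linear system $$\frac{dx_0}{dt}=A_4x_0+A_5x_1+\gamma_2,\qquad \frac{dx_1}{dt}=A_6x_0+A_7x_1+\gamma_3.$$ Then this system has a unique fixed point $E=(x_0^*,x_1^* )$, it is stable, and $$x_0^*=\frac{A_5\gamma_3-A_7\gamma_2}{A_4A_7-A_5A_6}>0,\qquad x_1^*=\frac{A_6\gamma_2-A_4\gamma_3}{A_4A_7-A_5A_6}>0.$$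
   Context: This is the "reversible model" for the proportions $x_0,x_1$ (and $x_2=1-x_0-x_1$) of three cancer cell phenotypes (CSC$_0$, NSCC$_1$, NSCC$_2$) in the special case where the per capita growth rate of the total population due to each phenotype is the same. The parameters are rates: $\alpha_1$ (CSC symmetric division), $\alpha_2,\alpha_3$ (asymmetric CSC division producing NSCC$_1$, NSCC$_2$), $\beta_1,\gamma_1$ (NSCC divisions), $\beta_2,\gamma_2$ (de-differentiation to CSC), $\beta_3,\gamma_3$ (interconversion between NSCC$_1$ and NSCC$_2$), $\beta_4,\gamma_4$ (death). "Stable" means the fixed point is asymptotically stable (both eigenvalues of the linearization have negative real part). *)

theory Defs
  imports "HOL-Analysis.Analysis"
begin

definition lin_field ::
  "real \<Rightarrow> real \<Rightarrow> real \<Rightarrow> real \<Rightarrow> real \<Rightarrow> real \<Rightarrow> real \<times> real \<Rightarrow> real \<times> real" where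
  "lin_field a4 a5 a6 a7 g2 g3 =
     (\<lambda>(x0, x1). (a4 * x0 + a5 * x1 + g2, a6 * x0 + a7 * x1 + g3))"

definition is_fixed_point :: "(real \<times> real \<Rightarrow> real \<times> real) \<Rightarrow> real \<times> real \<Rightarrow> bool" where
  "is_fixed_point F p \<longleftrightarrow> F p = (0, 0)"

definition lin_jacobian :: "real \<Rightarrow> real \<Rightarrow> real \<Rightarrow> real \<Rightarrow> complex^2^2" where
  "lin_jacobian a4 a5 a6 a7 =
     vector [vector [complex_of_real a4, complex_of_real a5],
             vector [complex_of_real a6, complex_of_real a7]]"

definition is_eigenvalue :: "complex^'n^'n \<Rightarrow> complex \<Rightarrow> bool" where
  "is_eigenvalue M l \<longleftrightarrow> det (mat l - M) = 0"

text \<open>Asymptotic stability of a fixed point of the linear system: every eigenvalue of the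
  linearization has negative real part (for a linear system the linearization is the
  same at every point).\<close>
definition lin_stable :: "real \<Rightarrow> real \<Rightarrow> real \<Rightarrow> real \<Rightarrow> bool" where
  "lin_stable a4 a5 a6 a7 \<longleftrightarrow>
     (\<forall>l. is_eigenvalue (lin_jacobian a4 a5 a6 a7) l \<longrightarrow> Re l < 0)"

end

theory Submission
  imports Defs
begin

text \<open>Conservation of the total population forces the diagonal entries to be
  A4 = -(\<alpha>2 + \<alpha>3 + \<gamma>2) and A7 = -(\<beta>2 + \<beta>3 + \<gamma>3). Then the trace is negative, and the
  determinant as well as both Cramer numerators expand into sums of positive terms
  (the only negative cross term \<alpha>2 \<beta>2 of A5 A6 is cancelled by A4 A7). A negative trace
  and a positive determinant make both eigenvalues of the 2x2 Jacobian lie in the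
  open left half plane, and a nonzero determinant makes the fixed point unique.\<close>

lemma lin_stable_if_trace_neg_det_pos:
  fixes a4 a5 a6 a7 :: real
  assumes trace: "a4 + a7 < 0" and det: "a4 * a7 - a5 * a6 > 0"
  shows "lin_stable a4 a5 a6 a7"
  unfolding lin_stable_def is_eigenvalue_def
proof (intro allI impI)
  fix l :: complex
  assume "det (mat l - lin_jacobian a4 a5 a6 a7) = 0"
  hence char: "(l - of_real a4) * (l - of_real a7) - of_real a5 * of_real a6 = 0"
    by (simp add: det_2 lin_jacobian_def mat_def)
  obtain x y where l: "l = Complex x y" by (cases l)
  from char have re: "(x - a4) * (x - a7) - y * y - a5 * a6 = 0"
    and im: "y * (2 * x - a4 - a7) = 0"
    by (simp_all add: l complex_eq_iff algebra_simps)
  show "Re l < 0"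
  proof (cases "y = 0")
    case True
    txt \<open>A real root x \<ge> 0 would make the characteristic polynomial positive.\<close>
    have "(x - a4) * (x - a7) - a5 * a6 = x * x - (a4 + a7) * x + (a4 * a7 - a5 * a6)"
      by (simp add: algebra_simps)
    moreover have "x \<ge> 0 \<Longrightarrow> x * x - (a4 + a7) * x \<ge> 0"
      using trace by (simp add: mult_nonpos_nonneg flip: left_diff_distrib)
    ultimately show ?thesis
      using re True det by (force simp: l)
  next
    case False
    with im have "2 * x = a4 + a7" by simp
    with trace show ?thesis by (simp add: l)
  qed
qed

lemma is_fixed_point_lin_field_iff:
  fixes a4 a5 a6 a7 g2 g3 :: real
  defines "d \<equiv> a4 * a7 - a5 * a6"
  assumes "d \<noteq> 0"
  shows "is_fixed_point (lin_field a4 a5 a6 a7 g2 g3) p \<longleftrightarrow>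
         p = ((a5 * g3 - a7 * g2) / d, (a6 * g2 - a4 * g3) / d)"
proof -
  obtain x y where p: "p = (x, y)" by (cases p)
  have "a4 * x + a5 * y + g2 = 0 \<and> a6 * x + a7 * y + g3 = 0 \<longleftrightarrow>
        d * x = a5 * g3 - a7 * g2 \<and> d * y = a6 * g2 - a4 * g3"
    using \<open>d \<noteq> 0\<close> unfolding d_def by algebra
  with \<open>d \<noteq> 0\<close> show ?thesis
    by (auto simp: p is_fixed_point_def lin_field_def field_simps)
qed

theorem theorem1:
  fixes \<alpha>1 \<alpha>2 \<alpha>3 \<beta>1 \<beta>2 \<beta>3 \<beta>4 \<gamma>1 \<gamma>2 \<gamma>3 \<gamma>4 A4 A5 A6 A7 :: real
  assumes pos: "\<alpha>1 > 0" "\<alpha>2 > 0" "\<alpha>3 > 0" "\<beta>1 > 0" "\<beta>2 > 0" "\<beta>3 > 0" "\<beta>4 > 0"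
      "\<gamma>1 > 0" "\<gamma>2 > 0" "\<gamma>3 > 0" "\<gamma>4 > 0"
    and eq1: "\<alpha>1 + \<alpha>2 + \<alpha>3 = \<beta>1 - \<beta>4"
    and eq2: "\<beta>1 - \<beta>4 = \<gamma>1 - \<gamma>4"
    and A4: "A4 = \<alpha>1 - (\<gamma>1 - \<gamma>4) - \<gamma>2"
    and A5: "A5 = \<beta>2 - \<gamma>2"
    and A6: "A6 = \<alpha>2 - \<gamma>3"
    and A7: "A7 = (\<beta>1 - \<beta>2 - \<beta>3 - \<beta>4) - (\<gamma>1 - \<gamma>4) - \<gamma>3"
  shows "(\<exists>!E. is_fixed_point (lin_field A4 A5 A6 A7 \<gamma>2 \<gamma>3) E) \<and>
         lin_stable A4 A5 A6 A7 \<and>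
         is_fixed_point (lin_field A4 A5 A6 A7 \<gamma>2 \<gamma>3)
           ((A5 * \<gamma>3 - A7 * \<gamma>2) / (A4 * A7 - A5 * A6),
            (A6 * \<gamma>2 - A4 * \<gamma>3) / (A4 * A7 - A5 * A6)) \<and>
         (A5 * \<gamma>3 - A7 * \<gamma>2) / (A4 * A7 - A5 * A6) > 0 \<and>
         (A6 * \<gamma>2 - A4 * \<gamma>3) / (A4 * A7 - A5 * A6) > 0"
proof -
  have a4: "A4 = -(\<alpha>2 + \<alpha>3 + \<gamma>2)" and a7: "A7 = -(\<beta>2 + \<beta>3 + \<gamma>3)"
    using A4 A7 eq1 eq2 by simp_all
  have "A4 * A7 - A5 * A6 = \<alpha>2 * \<beta>3 + \<alpha>3 * (\<beta>2 + \<beta>3) + (\<alpha>2 + \<alpha>3 + \<beta>2) * \<gamma>3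
      + \<gamma>2 * (\<alpha>2 + \<beta>2 + \<beta>3)"
    unfolding a4 a7 A5 A6 by (simp add: algebra_simps)
  hence det: "A4 * A7 - A5 * A6 > 0"
    using pos by (simp add: add_pos_pos)
  have "A5 * \<gamma>3 - A7 * \<gamma>2 = \<beta>2 * \<gamma>3 + (\<beta>2 + \<beta>3) * \<gamma>2"
    and "A6 * \<gamma>2 - A4 * \<gamma>3 = \<alpha>2 * \<gamma>2 + (\<alpha>2 + \<alpha>3) * \<gamma>3"
    unfolding a4 a7 A5 A6 by (simp_all add: algebra_simps)
  hence num: "A5 * \<gamma>3 - A7 * \<gamma>2 > 0" "A6 * \<gamma>2 - A4 * \<gamma>3 > 0"
    using pos by (simp_all add: add_pos_pos)
  have "A4 + A7 < 0"
    using pos unfolding a4 a7 by simp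
  from this det have "lin_stable A4 A5 A6 A7"
    by (rule lin_stable_if_trace_neg_det_pos)
  with det num show ?thesis
    by (simp add: is_fixed_point_lin_field_iff)
qed

end
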